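(* Let $G=(V,q)$ be a reversible connected graph and let $x_0\neq y_0\in V$. Then there exists an optimal transport plan $\rho$ from $x_0$ to $y_0$ such that (1) $\mu_\rho(k)=0$ for all integers $k$ with $|k|>1$, and (2) $\mu_\rho(-1)\ge 2q_{\min}$. Moreover, every optimal transport plan $\rho$ from a vertex $x_0$ to itself satisfies $\mu_\rho(k)=0$ for all $k\neq 0$.
   Context: A graph $G=(V,q)$ consists of a countable set $V$ and a function $q:V\times V\to[0,\infty)$ such that $\#\{y:q(x,y)>0\}<\infty$ for every $x\in V$. $G$ is reversible if there is $m:V\to(0,\infty)$ with $q(x,y)m(x)=q(y,x)m(y)$ for all $x,y$. For reversible $G$ write $x\sim y$ if $q(x,y)>0$, and let $d$ be the combinatorial distance $d(x,y)=\inf\{n: x=x_0\sim x_1\sim\dots\sim x_n=y\}$; connected means $d$ is finite. $q_{\min}:=\inf\{q(x,y): q(x,y)>0\}$. A transport plan from $x_0$ to $y_0$ is a map $\rho:V\times V\to[0,\infty)$ with $\sum_{y}\rho(x,y)=q(x_0,x)$ for all $x\neq x_0$ and $\sum_x\rho(x,y)=q(y_0,y)$ for all $y\ne y_0$. Its cost is $\mathrm{cost}(\rho)=\sum_{x,y}\rho(x,y)\big(d(x_0,y_0)-d(x,y)\big)$, and for $k\in\mathbb Z$, $\mu_\rho(k)=\sum_{x,y:\ d(x,y)-d(x_0,y_0)=k}\rho(x,y)$. A transport plan from $x_0$ to $y_0$ is optimal if it maximizes the cost among all transport plans from $x_0$ to $y_0$. *)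

theory Defs
  imports "HOL-Analysis.Analysis"
begin

definition is_graph :: "('a \<Rightarrow> 'a \<Rightarrow> real) \<Rightarrow> bool" where
  "is_graph q \<longleftrightarrow> (\<forall>x y. q x y \<ge> 0) \<and> (\<forall>x. finite {y. q x y > 0})"

definition reversible :: "('a \<Rightarrow> 'a \<Rightarrow> real) \<Rightarrow> bool" where
  "reversible q \<longleftrightarrow> (\<exists>m::'a \<Rightarrow> real. (\<forall>x. m x > 0) \<and> (\<forall>x y. q x y * m x = q y x * m y))"

definition edges :: "('a \<Rightarrow> 'a \<Rightarrow> real) \<Rightarrow> ('a \<times> 'a) set" where
  "edges q = {(x, y). q x y > 0}"

text \<open>Combinatorial distance (number of steps of a shortest path); meaningful when connected.\<close>
definition gdist :: "('a \<Rightarrow> 'a \<Rightarrow> real) \<Rightarrow> 'a \<Rightarrow> 'a \<Rightarrow> nat" where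
  "gdist q x y = (LEAST n. (x, y) \<in> (edges q) ^^ n)"

definition connected_graph :: "('a \<Rightarrow> 'a \<Rightarrow> real) \<Rightarrow> bool" where
  "connected_graph q \<longleftrightarrow> (\<forall>x y. \<exists>n. (x, y) \<in> (edges q) ^^ n)"

definition qmin :: "('a \<Rightarrow> 'a \<Rightarrow> real) \<Rightarrow> real" where
  "qmin q = Inf {q x y | x y. q x y > 0}"

definition transport_plan :: "('a \<Rightarrow> 'a \<Rightarrow> real) \<Rightarrow> 'a \<Rightarrow> 'a \<Rightarrow> ('a \<Rightarrow> 'a \<Rightarrow> real) \<Rightarrow> bool" where
  "transport_plan q x0 y0 \<rho> \<longleftrightarrow>
     (\<forall>x y. \<rho> x y \<ge> 0) \<and>
     (\<forall>x. x \<noteq> x0 \<longrightarrow> ((\<lambda>y. \<rho> x y) has_sum q x0 x) UNIV) \<and>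
     (\<forall>y. y \<noteq> y0 \<longrightarrow> ((\<lambda>x. \<rho> x y) has_sum q y0 y) UNIV)"

definition cost :: "('a \<Rightarrow> 'a \<Rightarrow> real) \<Rightarrow> 'a \<Rightarrow> 'a \<Rightarrow> ('a \<Rightarrow> 'a \<Rightarrow> real) \<Rightarrow> real" where
  "cost q x0 y0 \<rho> =
     (\<Sum>\<^sub>\<infinity>(x, y) \<in> UNIV. \<rho> x y * (real (gdist q x0 y0) - real (gdist q x y)))"

definition mu :: "('a \<Rightarrow> 'a \<Rightarrow> real) \<Rightarrow> 'a \<Rightarrow> 'a \<Rightarrow> ('a \<Rightarrow> 'a \<Rightarrow> real) \<Rightarrow> int \<Rightarrow> real" where
  "mu q x0 y0 \<rho> k =
     (\<Sum>\<^sub>\<infinity>(x, y) \<in> {(x, y). int (gdist q x y) - int (gdist q x0 y0) = k}. \<rho> x y)"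

definition optimal_plan :: "('a \<Rightarrow> 'a \<Rightarrow> real) \<Rightarrow> 'a \<Rightarrow> 'a \<Rightarrow> ('a \<Rightarrow> 'a \<Rightarrow> real) \<Rightarrow> bool" where
  "optimal_plan q x0 y0 \<rho> \<longleftrightarrow> transport_plan q x0 y0 \<rho> \<and>
     (\<forall>\<sigma>. transport_plan q x0 y0 \<sigma> \<longrightarrow> cost q x0 y0 \<sigma> \<le> cost q x0 y0 \<rho>)"

end

theory Submission
  imports Defs
begin

text \<open>
  Every transport plan is supported on the finite box \<open>N(x0) \<times> N(y0)\<close> of neighbourhoods,
  so the plans with vanishing (free, cost-neutral) entry at \<open>(x0, y0)\<close> form a compact set in
  the product topology on which the cost attains its maximum. Take a first step \<open>x1\<close> and a
  last step \<open>y1\<close> of a geodesic from \<open>x0\<close> to \<open>y0\<close>, and reroute the mass of every pair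
  \<open>(x, y)\<close> with \<open>x \<noteq> x0\<close>, \<open>y \<noteq> y0\<close> whose distance differs from \<open>d(x0, y0)\<close> by more than one,
  or with \<open>x = x1\<close> or \<open>y = y1\<close>, through \<open>(x, y0)\<close> and \<open>(x0, y)\<close>. The triangle inequality
  gives \<open>d(x, y0) + d(x0, y) \<le> d(x, y) + d(x0, y0)\<close> for all these pairs, so rerouting does not
  decrease the cost. Afterwards no mass jumps by more than one, and the pairs \<open>(x1, y0)\<close> and
  \<open>(x0, y1)\<close> carry their full masses \<open>q(x0, x1)\<close> and \<open>q(y0, y1)\<close> at distance change \<open>-1\<close>.

  For \<open>x0 = y0\<close> the cost is minus the transported distance, and the plan that keeps all mass in
  place has cost zero, so an optimal plan moves no mass at all.
\<close>

lemma gdist_le_path: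
  fixes q :: "'a \<Rightarrow> 'a \<Rightarrow> real"
  shows "(x, y) \<in> edges q ^^ n \<Longrightarrow> gdist q x y \<le> n"
  unfolding gdist_def by (rule Least_le)

lemma gdist_self [simp]: "gdist q x x = 0"
  by (metis gdist_le_path le_zero_eq relpow_0_I)

lemma gdist_edge: "q x y > 0 \<Longrightarrow> gdist q x y \<le> 1"
  using gdist_le_path[where n=1] by (simp add: edges_def)

context
  fixes q :: "'a \<Rightarrow> 'a \<Rightarrow> real"
  assumes connected: "connected_graph q"
begin

lemma gdist_path: "(x, y) \<in> edges q ^^ gdist q x y"
proof -
  obtain n where "(x, y) \<in> edges q ^^ n"
    using connected unfolding connected_graph_def by blast
  then show ?thesis unfolding gdist_def by (rule LeastI)
qed

lemma gdist_eq_0_iff: "gdist q x y = 0 \<longleftrightarrow> x = y"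
  using gdist_path[of x y] by auto

lemma gdist_triangle: "gdist q x z \<le> gdist q x y + gdist q y z"
  using gdist_path[of x y] gdist_path[of y z] by (intro gdist_le_path) (auto simp: relpow_add)

lemma geodesic_first_step:
  assumes "x \<noteq> y"
  obtains x1 where "q x x1 > 0" "gdist q x1 y + 1 = gdist q x y"
proof -
  obtain m where m: "gdist q x y = Suc m"
    using assms gdist_eq_0_iff not0_implies_Suc by blast
  then obtain x1 where "(x, x1) \<in> edges q" "(x1, y) \<in> edges q ^^ m"
    using gdist_path[of x y] by (metis relpow_Suc_D2)
  then have "q x x1 > 0" "gdist q x1 y \<le> m"
    by (auto simp: edges_def intro: gdist_le_path)
  moreover have "gdist q x y \<le> gdist q x x1 + gdist q x1 y" by (rule gdist_triangle)
  ultimately show ?thesis using that gdist_edge[of q x x1] m by simp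
qed

lemma geodesic_last_step:
  assumes "x \<noteq> y"
  obtains y1 where "q y1 y > 0" "gdist q x y1 + 1 = gdist q x y"
proof -
  obtain m where m: "gdist q x y = Suc m"
    using assms gdist_eq_0_iff not0_implies_Suc by blast
  then obtain y1 where "(x, y1) \<in> edges q ^^ m" "(y1, y) \<in> edges q"
    using gdist_path[of x y] by auto
  then have "q y1 y > 0" "gdist q x y1 \<le> m"
    by (auto simp: edges_def intro: gdist_le_path)
  moreover have "gdist q x y \<le> gdist q x y1 + gdist q y1 y" by (rule gdist_triangle)
  ultimately show ?thesis using that gdist_edge[of q y1 y] m by simp
qed

end

lemma reversible_edge_sym:
  assumes "reversible q" "q x y > 0"
  shows "q y x > 0"
proof -
  obtain m where "\<forall>x. m x > 0" "\<forall>x y. q x y * m x = q y x * m y"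
    using assms(1) unfolding reversible_def by blast
  with assms(2) show ?thesis by (metis mult_pos_pos zero_less_mult_pos2)
qed

lemma qmin_le: "q x y > 0 \<Longrightarrow> qmin q \<le> q x y"
  unfolding qmin_def by (rule cInf_lower) (auto intro!: bdd_belowI[of _ 0])

lemma mu_eq_0:
  assumes "\<And>x y. \<rho> x y \<noteq> 0 \<Longrightarrow> int (gdist q x y) - int (gdist q x0 y0) \<noteq> k"
  shows "mu q x0 y0 \<rho> k = 0"
  unfolding mu_def using assms by (intro infsum_0) auto

lemma has_sum_finite_support:
  fixes f :: "'b \<Rightarrow> 'c::{comm_monoid_add, topological_space}"
  assumes "finite F" "\<And>x. x \<notin> F \<Longrightarrow> f x = 0"
  shows "(f has_sum sum f (A \<inter> F)) A"
  using has_sum_finite[of "A \<inter> F" f] assms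
  by (subst has_sum_cong_neutral[of "A \<inter> F" A]) auto

lemma continuous_on_apply2: "continuous_on UNIV (\<lambda>f::'a \<Rightarrow> 'b \<Rightarrow> real. f x y)"
  using continuous_on_product_then_coordinatewise[OF continuous_on_product_coordinates[of x]] .

lemma compact_PiE_box:
  "compact (PiE UNIV (\<lambda>x. PiE UNIV (\<lambda>y. {0..(c x y::real)})))"
proof -
  have "compact (PiE UNIV (\<lambda>y. {0..(c x y::real)}))" for x
    using compactin_PiE[of "\<lambda>_. euclidean" UNIV "\<lambda>y. {0..c x y}"]
    by (simp add: euclidean_product_topology)
  then show ?thesis
    using compactin_PiE[of "\<lambda>_. euclidean" UNIV "\<lambda>x. PiE UNIV (\<lambda>y. {0..c x y})"]
    by (simp add: euclidean_product_topology)
qed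

locale reversible_connected_graph =
  fixes q :: "'a \<Rightarrow> 'a \<Rightarrow> real"
  assumes graph: "is_graph q" and reversible: "reversible q" and connected: "connected_graph q"
begin

abbreviation d :: "'a \<Rightarrow> 'a \<Rightarrow> nat" where "d \<equiv> gdist q"

lemma q_nonneg: "0 \<le> q x y"
  using graph unfolding is_graph_def by auto

definition nbhd :: "'a \<Rightarrow> 'a set" where
  "nbhd x = insert x {y. 0 < q x y}"

lemma finite_nbhd: "finite (nbhd x)"
  using graph unfolding is_graph_def nbhd_def by auto

lemma self_in_nbhd [simp]: "x \<in> nbhd x"
  unfolding nbhd_def by simp

lemma q_eq_0_outside_nbhd: "y \<notin> nbhd x \<Longrightarrow> q x y = 0"
  unfolding nbhd_def using q_nonneg[of x y] by auto

lemma gdist_to_nbhd: "y \<in> nbhd x \<Longrightarrow> d x y \<le> 1"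
  unfolding nbhd_def using gdist_edge by auto

lemma gdist_from_nbhd: "y \<in> nbhd x \<Longrightarrow> d y x \<le> 1"
  unfolding nbhd_def using gdist_edge reversible_edge_sym[OF reversible] by fastforce

lemmas gdist_triangle = gdist_triangle[OF connected]

definition finite_plan :: "'a \<Rightarrow> 'a \<Rightarrow> ('a \<Rightarrow> 'a \<Rightarrow> real) \<Rightarrow> bool" where
  "finite_plan x0 y0 \<rho> \<longleftrightarrow> (\<forall>x y. 0 \<le> \<rho> x y) \<and>
     (\<forall>x y. x \<notin> nbhd x0 \<or> y \<notin> nbhd y0 \<longrightarrow> \<rho> x y = 0) \<and>
     (\<forall>x. x \<noteq> x0 \<longrightarrow> (\<Sum>y\<in>nbhd y0. \<rho> x y) = q x0 x) \<and>
     (\<forall>y. y \<noteq> y0 \<longrightarrow> (\<Sum>x\<in>nbhd x0. \<rho> x y) = q y0 y)"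

lemma finite_plan_nonneg: "finite_plan x0 y0 \<rho> \<Longrightarrow> 0 \<le> \<rho> x y"
  unfolding finite_plan_def by blast

lemma finite_plan_support: "finite_plan x0 y0 \<rho> \<Longrightarrow> \<rho> x y \<noteq> 0 \<Longrightarrow> x \<in> nbhd x0 \<and> y \<in> nbhd y0"
  unfolding finite_plan_def by blast

lemma transport_plan_entry_le:
  assumes "transport_plan q x0 y0 \<rho>"
  shows "x \<noteq> x0 \<Longrightarrow> \<rho> x y \<le> q x0 x" and "y \<noteq> y0 \<Longrightarrow> \<rho> x y \<le> q y0 y"
proof -
  have nonneg: "\<And>x y. 0 \<le> \<rho> x y"
    using assms unfolding transport_plan_def by blast
  show "\<rho> x y \<le> q x0 x" if "x \<noteq> x0"
    using finite_sum_le_has_sum[where f="\<lambda>y. \<rho> x y" and A=UNIV and B="{y}"] assms that nonneg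
    unfolding transport_plan_def by simp
  show "\<rho> x y \<le> q y0 y" if "y \<noteq> y0"
    using finite_sum_le_has_sum[where f="\<lambda>x. \<rho> x y" and A=UNIV and B="{x}"] assms that nonneg
    unfolding transport_plan_def by simp
qed

lemma transport_plan_iff_finite_plan: "transport_plan q x0 y0 \<rho> \<longleftrightarrow> finite_plan x0 y0 \<rho>"
proof -
  have support: "\<rho> x y = 0" if tp: "transport_plan q x0 y0 \<rho>" and "x \<notin> nbhd x0 \<or> y \<notin> nbhd y0"
    for x y
  proof -
    have "\<rho> x y \<le> 0"
      using that transport_plan_entry_le[OF tp] q_eq_0_outside_nbhd self_in_nbhd by metis
    then show ?thesis using tp unfolding transport_plan_def by (simp add: order_antisym)
  qed
  have sums: "(f has_sum s) UNIV \<longleftrightarrow> sum f (nbhd z) = s"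
    if "\<And>y. y \<notin> nbhd z \<Longrightarrow> f y = 0" for f :: "'a \<Rightarrow> real" and s z
  proof -
    have "(f has_sum sum f (nbhd z)) UNIV"
      using has_sum_finite_support[where F="nbhd z" and f=f and A=UNIV] finite_nbhd that by simp
    then show ?thesis using has_sum_unique by blast
  qed
  show ?thesis
  proof
    assume tp: "transport_plan q x0 y0 \<rho>"
    then have supp: "\<forall>x y. x \<notin> nbhd x0 \<or> y \<notin> nbhd y0 \<longrightarrow> \<rho> x y = 0"
      using support by blast
    have "(\<Sum>y\<in>nbhd y0. \<rho> x y) = q x0 x" if "x \<noteq> x0" for x
      using tp that supp sums[of y0 "\<lambda>y. \<rho> x y"] unfolding transport_plan_def by blast
    moreover have "(\<Sum>x\<in>nbhd x0. \<rho> x y) = q y0 y" if "y \<noteq> y0" for y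
      using tp that supp sums[of x0 "\<lambda>x. \<rho> x y"] unfolding transport_plan_def by blast
    ultimately show "finite_plan x0 y0 \<rho>"
      using tp supp unfolding transport_plan_def finite_plan_def by blast
  next
    assume fp: "finite_plan x0 y0 \<rho>"
    then have "((\<lambda>y. \<rho> x y) has_sum q x0 x) UNIV" if "x \<noteq> x0" for x
      using that sums[of y0 "\<lambda>y. \<rho> x y"] unfolding finite_plan_def by blast
    moreover have "((\<lambda>x. \<rho> x y) has_sum q y0 y) UNIV" if "y \<noteq> y0" for y
      using fp that sums[of x0 "\<lambda>x. \<rho> x y"] unfolding finite_plan_def by blast
    ultimately show "transport_plan q x0 y0 \<rho>"
      using fp unfolding transport_plan_def finite_plan_def by blast
  qed
qed

definition finite_cost :: "'a \<Rightarrow> 'a \<Rightarrow> ('a \<Rightarrow> 'a \<Rightarrow> real) \<Rightarrow> real" where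
  "finite_cost x0 y0 \<rho> = (\<Sum>x\<in>nbhd x0. \<Sum>y\<in>nbhd y0. \<rho> x y * (real (d x0 y0) - real (d x y)))"

lemma cost_eq_finite_cost:
  assumes "finite_plan x0 y0 \<rho>"
  shows "cost q x0 y0 \<rho> = finite_cost x0 y0 \<rho>"
proof -
  let ?f = "\<lambda>(x, y). \<rho> x y * (real (d x0 y0) - real (d x y))"
  have "(?f has_sum sum ?f (UNIV \<inter> nbhd x0 \<times> nbhd y0)) UNIV"
    using finite_plan_support[OF assms] by (intro has_sum_finite_support) (auto simp: finite_nbhd)
  then show ?thesis
    unfolding cost_def finite_cost_def by (simp add: infsumI sum.cartesian_product)
qed

lemma optimal_plan_iff:
  "optimal_plan q x0 y0 \<rho> \<longleftrightarrow> finite_plan x0 y0 \<rho> \<and>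
     (\<forall>\<sigma>. finite_plan x0 y0 \<sigma> \<longrightarrow> finite_cost x0 y0 \<sigma> \<le> finite_cost x0 y0 \<rho>)"
  by (auto simp: optimal_plan_def transport_plan_iff_finite_plan cost_eq_finite_cost)

lemma sum_le_mu:
  assumes "finite_plan x0 y0 \<rho>" "finite P" "P \<subseteq> {(x, y). int (d x y) - int (d x0 y0) = k}"
  shows "(\<Sum>(x, y)\<in>P. \<rho> x y) \<le> mu q x0 y0 \<rho> k"
proof -
  let ?L = "{(x, y). int (d x y) - int (d x0 y0) = k}"
  have "(\<lambda>(x, y). \<rho> x y) summable_on ?L"
    using finite_plan_support[OF assms(1)] finite_nbhd
      has_sum_finite_support[where F="nbhd x0 \<times> nbhd y0" and f="\<lambda>(x, y). \<rho> x y" and A="?L"]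
    by (auto intro: has_sum_imp_summable)
  then show ?thesis
    unfolding mu_def using assms(1)
    by (intro finite_sum_le_has_sum[OF _ assms(2,3)]) (auto simp: finite_plan_nonneg)
qed

lemma finite_plan_le_bound:
  assumes "finite_plan x0 y0 \<rho>" "(x, y) \<noteq> (x0, y0)"
  shows "\<rho> x y \<le> q x0 x + q y0 y"
proof (cases "\<rho> x y = 0")
  case False
  then have xy: "x \<in> nbhd x0" "y \<in> nbhd y0"
    using finite_plan_support[OF assms(1)] by auto
  have nonneg: "\<And>x y. 0 \<le> \<rho> x y"
    using finite_plan_nonneg[OF assms(1)] .
  show ?thesis
  proof (cases "x = x0")
    case False
    have "\<rho> x y \<le> (\<Sum>y\<in>nbhd y0. \<rho> x y)"
      using xy finite_nbhd nonneg by (intro member_le_sum) auto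
    then show ?thesis using assms(1) False q_nonneg[of y0 y] unfolding finite_plan_def by simp
  next
    case True
    then have "y \<noteq> y0" using assms(2) by simp
    have "\<rho> x y \<le> (\<Sum>x\<in>nbhd x0. \<rho> x y)"
      using xy finite_nbhd nonneg by (intro member_le_sum) auto
    then show ?thesis using assms(1) \<open>y \<noteq> y0\<close> q_nonneg[of x0 x] unfolding finite_plan_def by simp
  qed
qed (simp add: q_nonneg)

lemma finite_plan_direct:
  "finite_plan x0 y0 (\<lambda>x y. (if x \<noteq> x0 \<and> y = y0 then q x0 x else 0) + (if x = x0 \<and> y \<noteq> y0 then q y0 y else 0))"
  unfolding finite_plan_def
  using q_nonneg q_eq_0_outside_nbhd finite_nbhd by (auto simp: sum.distrib)

lemma finite_cost_attains_max:
  "\<exists>\<rho>. finite_plan x0 y0 \<rho> \<and> (\<forall>\<sigma>. finite_plan x0 y0 \<sigma> \<longrightarrow> finite_cost x0 y0 \<sigma> \<le> finite_cost x0 y0 \<rho>)"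
proof -
  define S where "S = {\<rho>. finite_plan x0 y0 \<rho> \<and> \<rho> x0 y0 = 0}"
  have "closed S"
    unfolding S_def finite_plan_def
    by (intro closed_Collect_conj closed_Collect_all closed_Collect_imp open_Collect_const
        closed_Collect_le closed_Collect_eq continuous_on_sum continuous_on_apply2 continuous_on_const)
  moreover have "S \<subseteq> PiE UNIV (\<lambda>x. PiE UNIV (\<lambda>y. {0..q x0 x + q y0 y}))"
  proof
    fix \<rho> assume "\<rho> \<in> S"
    then have "finite_plan x0 y0 \<rho>" "\<rho> x0 y0 = 0" unfolding S_def by auto
    then have "\<rho> x y \<in> {0..q x0 x + q y0 y}" for x y
      using finite_plan_le_bound[of x0 y0 \<rho> x y] finite_plan_nonneg q_nonneg
      by (cases "(x, y) = (x0, y0)") auto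
    then show "\<rho> \<in> PiE UNIV (\<lambda>x. PiE UNIV (\<lambda>y. {0..q x0 x + q y0 y}))"
      by (simp add: PiE_UNIV_domain)
  qed
  ultimately have "compact S"
    using compact_Int_closed[OF compact_PiE_box] by (metis inf.absorb_iff2)
  moreover have "S \<noteq> {}"
    using finite_plan_direct unfolding S_def by fastforce
  moreover have "continuous_on S (finite_cost x0 y0)"
    unfolding finite_cost_def
    by (intro continuous_on_sum continuous_on_mult_right continuous_on_subset[OF continuous_on_apply2]) auto
  ultimately obtain \<rho> where \<rho>: "\<rho> \<in> S" "\<And>\<sigma>. \<sigma> \<in> S \<Longrightarrow> finite_cost x0 y0 \<sigma> \<le> finite_cost x0 y0 \<rho>"
    using continuous_attains_sup by metis
  have "finite_cost x0 y0 \<sigma> \<le> finite_cost x0 y0 \<rho>" if "finite_plan x0 y0 \<sigma>" for \<sigma>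
  proof -
    \<comment> \<open>the entry at (x0, y0) is unconstrained and carries no cost\<close>
    let ?\<sigma>' = "\<lambda>x y. if x = x0 \<and> y = y0 then 0 else \<sigma> x y"
    have "?\<sigma>' \<in> S"
      using that unfolding S_def finite_plan_def by auto
    then have "finite_cost x0 y0 ?\<sigma>' \<le> finite_cost x0 y0 \<rho>"
      by (rule \<rho>(2))
    moreover have "finite_cost x0 y0 ?\<sigma>' = finite_cost x0 y0 \<sigma>"
      unfolding finite_cost_def by (intro sum.cong) auto
    ultimately show ?thesis by simp
  qed
  then show ?thesis using \<rho>(1) unfolding S_def by blast
qed

definition reroute ::
    "'a \<Rightarrow> 'a \<Rightarrow> ('a \<Rightarrow> 'a \<Rightarrow> real) \<Rightarrow> ('a \<Rightarrow> 'a \<Rightarrow> real) \<Rightarrow> 'a \<Rightarrow> 'a \<Rightarrow> real" where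
  "reroute x0 y0 \<rho> B x y = \<rho> x y - B x y
     + (if x \<noteq> x0 \<and> y = y0 then \<Sum>y'\<in>nbhd y0. B x y' else 0)
     + (if x = x0 \<and> y \<noteq> y0 then \<Sum>x'\<in>nbhd x0. B x' y else 0)"

lemma finite_plan_reroute:
  assumes plan: "finite_plan x0 y0 \<rho>" and B: "\<And>x y. 0 \<le> B x y" "\<And>x y. B x y \<le> \<rho> x y"
  shows "finite_plan x0 y0 (reroute x0 y0 \<rho> B)"
proof -
  have B_support: "B x y = 0" if "x \<notin> nbhd x0 \<or> y \<notin> nbhd y0" for x y
    using B[of x y] finite_plan_support[OF plan, of x y] that by fastforce
  have "0 \<le> reroute x0 y0 \<rho> B x y" for x y
  proof -
    have "0 \<le> \<rho> x y - B x y" "0 \<le> (\<Sum>y'\<in>nbhd y0. B x y')" "0 \<le> (\<Sum>x'\<in>nbhd x0. B x' y)"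
      using B by (auto intro: sum_nonneg)
    then show ?thesis unfolding reroute_def by simp
  qed
  moreover have "reroute x0 y0 \<rho> B x y = 0" if "x \<notin> nbhd x0 \<or> y \<notin> nbhd y0" for x y
  proof -
    have "\<rho> x y = 0" "B x y = 0"
      using that B_support finite_plan_support[OF plan, of x y] by auto
    then show ?thesis using that B_support unfolding reroute_def by auto
  qed
  moreover have "(\<Sum>y\<in>nbhd y0. reroute x0 y0 \<rho> B x y) = q x0 x" if "x \<noteq> x0" for x
  proof -
    have "(\<Sum>y\<in>nbhd y0. reroute x0 y0 \<rho> B x y)
        = (\<Sum>y\<in>nbhd y0. \<rho> x y) - (\<Sum>y\<in>nbhd y0. B x y) + (\<Sum>y\<in>nbhd y0. B x y)"
      using that finite_nbhd unfolding reroute_def by (simp add: sum.distrib sum_subtractf)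
    then show ?thesis using plan that unfolding finite_plan_def by simp
  qed
  moreover have "(\<Sum>x\<in>nbhd x0. reroute x0 y0 \<rho> B x y) = q y0 y" if "y \<noteq> y0" for y
  proof -
    have "(\<Sum>x\<in>nbhd x0. reroute x0 y0 \<rho> B x y)
        = (\<Sum>x\<in>nbhd x0. \<rho> x y) - (\<Sum>x\<in>nbhd x0. B x y) + (\<Sum>x\<in>nbhd x0. B x y)"
      using that finite_nbhd unfolding reroute_def by (simp add: sum.distrib sum_subtractf)
    then show ?thesis using plan that unfolding finite_plan_def by simp
  qed
  ultimately show ?thesis unfolding finite_plan_def by blast
qed

lemma finite_cost_reroute:
  assumes "\<And>y. B x0 y = 0" "\<And>x. B x y0 = 0"
  shows "finite_cost x0 y0 (reroute x0 y0 \<rho> B) = finite_cost x0 y0 \<rho>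
    + (\<Sum>x\<in>nbhd x0. \<Sum>y\<in>nbhd y0. B x y * (real (d x y) + real (d x0 y0) - real (d x y0) - real (d x0 y)))"
proof -
  define w where "w x y = real (d x0 y0) - real (d x y)" for x y
  have cost: "finite_cost x0 y0 \<sigma> = (\<Sum>x\<in>nbhd x0. \<Sum>y\<in>nbhd y0. \<sigma> x y * w x y)" for \<sigma>
    unfolding finite_cost_def w_def ..
  have to_row: "(\<Sum>x\<in>nbhd x0. \<Sum>y\<in>nbhd y0. (if x \<noteq> x0 \<and> y = y0 then \<Sum>y'\<in>nbhd y0. B x y' else 0) * w x y)
      = (\<Sum>x\<in>nbhd x0. \<Sum>y\<in>nbhd y0. B x y * w x y0)"
  proof (rule sum.cong[OF refl])
    fix x
    have "(if x \<noteq> x0 \<and> y = y0 then \<Sum>y'\<in>nbhd y0. B x y' else 0) * w x y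
        = (if y = y0 then \<Sum>y'\<in>nbhd y0. B x y' * w x y0 else 0)" for y
      using assms(1) by (auto simp: sum_distrib_right)
    then show "(\<Sum>y\<in>nbhd y0. (if x \<noteq> x0 \<and> y = y0 then \<Sum>y'\<in>nbhd y0. B x y' else 0) * w x y)
        = (\<Sum>y\<in>nbhd y0. B x y * w x y0)"
      using finite_nbhd by simp
  qed
  have to_column: "(\<Sum>x\<in>nbhd x0. \<Sum>y\<in>nbhd y0. (if x = x0 \<and> y \<noteq> y0 then \<Sum>x'\<in>nbhd x0. B x' y else 0) * w x y)
      = (\<Sum>x\<in>nbhd x0. \<Sum>y\<in>nbhd y0. B x y * w x0 y)"
  proof -
    have "(if x = x0 \<and> y \<noteq> y0 then \<Sum>x'\<in>nbhd x0. B x' y else 0) * w x y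
        = (if x = x0 then \<Sum>x'\<in>nbhd x0. B x' y * w x0 y else 0)" for x y
      using assms(2) by (auto simp: sum_distrib_right)
    then have "(\<Sum>y\<in>nbhd y0. \<Sum>x\<in>nbhd x0. (if x = x0 \<and> y \<noteq> y0 then \<Sum>x'\<in>nbhd x0. B x' y else 0) * w x y)
        = (\<Sum>y\<in>nbhd y0. \<Sum>x\<in>nbhd x0. B x y * w x0 y)"
      using finite_nbhd by simp
    then show ?thesis by (simp only: sum.swap[of _ "nbhd y0"])
  qed
  have "finite_cost x0 y0 (reroute x0 y0 \<rho> B) = finite_cost x0 y0 \<rho>
      - (\<Sum>x\<in>nbhd x0. \<Sum>y\<in>nbhd y0. B x y * w x y)
      + (\<Sum>x\<in>nbhd x0. \<Sum>y\<in>nbhd y0. (if x \<noteq> x0 \<and> y = y0 then \<Sum>y'\<in>nbhd y0. B x y' else 0) * w x y)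
      + (\<Sum>x\<in>nbhd x0. \<Sum>y\<in>nbhd y0. (if x = x0 \<and> y \<noteq> y0 then \<Sum>x'\<in>nbhd x0. B x' y else 0) * w x y)"
    unfolding cost reroute_def by (simp only: distrib_right left_diff_distrib sum.distrib sum_subtractf)
  also have "\<dots> = finite_cost x0 y0 \<rho> + (\<Sum>x\<in>nbhd x0. \<Sum>y\<in>nbhd y0. B x y * (w x y0 + w x0 y - w x y))"
    unfolding to_row to_column by (simp add: distrib_left right_diff_distrib sum.distrib sum_subtractf)
  finally show ?thesis unfolding w_def by (simp add: algebra_simps)
qed

lemma reroute_full_row:
  assumes "finite_plan x0 y0 \<rho>" "x \<noteq> x0" "B x y0 = 0" "\<And>y. y \<noteq> y0 \<Longrightarrow> B x y = \<rho> x y"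
  shows "reroute x0 y0 \<rho> B x y0 = q x0 x"
proof -
  have "B x y = \<rho> x y - (if y = y0 then \<rho> x y0 else 0)" for y
    using assms(3,4) by auto
  then have "(\<Sum>y\<in>nbhd y0. B x y) = (\<Sum>y\<in>nbhd y0. \<rho> x y) - \<rho> x y0"
    using finite_nbhd by (simp add: sum_subtractf)
  then show ?thesis using assms unfolding reroute_def finite_plan_def by simp
qed

lemma reroute_full_column:
  assumes "finite_plan x0 y0 \<rho>" "y \<noteq> y0" "B x0 y = 0" "\<And>x. x \<noteq> x0 \<Longrightarrow> B x y = \<rho> x y"
  shows "reroute x0 y0 \<rho> B x0 y = q y0 y"
proof -
  have "B x y = \<rho> x y - (if x = x0 then \<rho> x0 y else 0)" for x
    using assms(3,4) by auto
  then have "(\<Sum>x\<in>nbhd x0. B x y) = (\<Sum>x\<in>nbhd x0. \<rho> x y) - \<rho> x0 y"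
    using finite_nbhd by (simp add: sum_subtractf)
  then show ?thesis using assms unfolding reroute_def finite_plan_def by simp
qed

lemma gdist_nbhd_boundary:
  assumes "x \<in> nbhd x0" "y \<in> nbhd y0" "x = x0 \<or> y = y0"
  shows "\<bar>int (d x y) - int (d x0 y0)\<bar> \<le> 1"
  using assms gdist_to_nbhd gdist_from_nbhd
    gdist_triangle[of x0 y y0] gdist_triangle[of x0 y0 y] gdist_triangle[of x y0 x0] gdist_triangle[of x0 y0 x]
  by fastforce

lemma reroute_gain_long_jump:
  assumes "x \<in> nbhd x0" "y \<in> nbhd y0" "1 < \<bar>int (d x y) - int (d x0 y0)\<bar>"
  shows "d x y0 + d x0 y \<le> d x y + d x0 y0"
proof -
  have "d x x0 \<le> 1" "d x0 x \<le> 1" "d y0 y \<le> 1" "d y y0 \<le> 1"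
    using assms(1,2) gdist_to_nbhd gdist_from_nbhd by auto
  moreover have "d x y0 \<le> d x x0 + d x0 y0" "d x0 y \<le> d x0 y0 + d y0 y"
    "d x y0 \<le> d x y + d y y0" "d x0 y \<le> d x0 x + d x y"
    by (rule gdist_triangle)+
  ultimately show ?thesis using assms(3) by linarith
qed

lemma reroute_gain_first_step:
  assumes "q x0 x1 > 0" "d x1 y0 + 1 = d x0 y0"
  shows "d x1 y0 + d x0 y \<le> d x1 y + d x0 y0"
  using assms gdist_edge[of q, OF assms(1)] gdist_triangle[of x0 y x1] by linarith

lemma reroute_gain_last_step:
  assumes "q y1 y0 > 0" "d x0 y1 + 1 = d x0 y0"
  shows "d x y0 + d x0 y1 \<le> d x y1 + d x0 y0"
  using assms gdist_edge[of q, OF assms(1)] gdist_triangle[of x y0 y1] by linarith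

lemma exists_short_plan:
  assumes "x0 \<noteq> y0" and plan: "finite_plan x0 y0 \<rho>"
  obtains \<rho>' where "finite_plan x0 y0 \<rho>'" "finite_cost x0 y0 \<rho> \<le> finite_cost x0 y0 \<rho>'"
    "\<And>x y. \<rho>' x y \<noteq> 0 \<Longrightarrow> \<bar>int (d x y) - int (d x0 y0)\<bar> \<le> 1"
    "2 * qmin q \<le> mu q x0 y0 \<rho>' (-1)"
proof -
  obtain x1 where x1: "q x0 x1 > 0" "d x1 y0 + 1 = d x0 y0"
    using geodesic_first_step[OF connected assms(1)] .
  obtain y1 where y1: "q y1 y0 > 0" "d x0 y1 + 1 = d x0 y0"
    using geodesic_last_step[OF connected assms(1)] .
  have "q y0 y1 > 0"
    using reversible_edge_sym[OF reversible y1(1)] .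
  have "x1 \<noteq> x0" "y1 \<noteq> y0"
    using x1(2) y1(2) by auto
  define moved where "moved x y \<longleftrightarrow> x \<noteq> x0 \<and> y \<noteq> y0 \<and>
      (1 < \<bar>int (d x y) - int (d x0 y0)\<bar> \<or> x = x1 \<or> y = y1)" for x y
  define B where "B x y = (if moved x y then \<rho> x y else 0)" for x y
  define \<rho>' where "\<rho>' = reroute x0 y0 \<rho> B"
  have B: "\<And>x y. 0 \<le> B x y" "\<And>x y. B x y \<le> \<rho> x y" "\<And>y. B x0 y = 0" "\<And>x. B x y0 = 0"
    using finite_plan_nonneg[OF plan] unfolding B_def moved_def by auto
  have plan': "finite_plan x0 y0 \<rho>'"
    unfolding \<rho>'_def using plan B(1,2) by (rule finite_plan_reroute)
  have "0 \<le> B x y * (real (d x y) + real (d x0 y0) - real (d x y0) - real (d x0 y))"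
    if "x \<in> nbhd x0" "y \<in> nbhd y0" for x y
  proof (cases "moved x y")
    case True
    then have "d x y0 + d x0 y \<le> d x y + d x0 y0"
      using reroute_gain_long_jump[OF that] reroute_gain_first_step[OF x1] reroute_gain_last_step[OF y1]
      unfolding moved_def by blast
    then have "real (d x y0) + real (d x0 y) \<le> real (d x y) + real (d x0 y0)"
      by (metis of_nat_add of_nat_le_iff)
    then show ?thesis using B(1)[of x y] by simp
  qed (simp add: B_def)
  then have cost: "finite_cost x0 y0 \<rho> \<le> finite_cost x0 y0 \<rho>'"
    unfolding \<rho>'_def finite_cost_reroute[where B=B and \<rho>=\<rho>, OF B(3,4)] by (simp add: sum_nonneg)
  have short: "\<bar>int (d x y) - int (d x0 y0)\<bar> \<le> 1" if "\<rho>' x y \<noteq> 0" for x y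
  proof (cases "x = x0 \<or> y = y0")
    case True
    then show ?thesis
      using gdist_nbhd_boundary finite_plan_support[OF plan' that] by blast
  next
    case False
    then have "\<rho>' x y = \<rho> x y - B x y"
      unfolding \<rho>'_def reroute_def by simp
    then have "\<not> moved x y"
      using that unfolding B_def by auto
    then show ?thesis using False unfolding moved_def by auto
  qed
  have "\<rho>' x1 y0 = q x0 x1"
    unfolding \<rho>'_def using plan \<open>x1 \<noteq> x0\<close> B(4) by (rule reroute_full_row) (use \<open>x1 \<noteq> x0\<close> in \<open>simp add: B_def moved_def\<close>)
  moreover have "\<rho>' x0 y1 = q y0 y1"
    unfolding \<rho>'_def using plan \<open>y1 \<noteq> y0\<close> B(3) by (rule reroute_full_column) (use \<open>y1 \<noteq> y0\<close> in \<open>simp add: B_def moved_def\<close>)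
  moreover have "(\<Sum>(x, y)\<in>{(x1, y0), (x0, y1)}. \<rho>' x y) \<le> mu q x0 y0 \<rho>' (-1)"
    using x1(2) y1(2) by (intro sum_le_mu[OF plan']) auto
  ultimately have "q x0 x1 + q y0 y1 \<le> mu q x0 y0 \<rho>' (-1)"
    using \<open>x1 \<noteq> x0\<close> by simp
  moreover have "2 * qmin q \<le> q x0 x1 + q y0 y1"
    using qmin_le[of q, OF x1(1)] qmin_le[of q, OF \<open>q y0 y1 > 0\<close>] by simp
  ultimately show ?thesis
    using that plan' cost short by fastforce
qed


lemma exists_optimal_short_plan:
  assumes "x0 \<noteq> y0"
  obtains \<rho> where "optimal_plan q x0 y0 \<rho>"
    "\<And>x y. \<rho> x y \<noteq> 0 \<Longrightarrow> \<bar>int (d x y) - int (d x0 y0)\<bar> \<le> 1"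
    "2 * qmin q \<le> mu q x0 y0 \<rho> (-1)"
proof -
  obtain \<rho> where plan: "finite_plan x0 y0 \<rho>"
    and max: "\<And>\<sigma>. finite_plan x0 y0 \<sigma> \<Longrightarrow> finite_cost x0 y0 \<sigma> \<le> finite_cost x0 y0 \<rho>"
    using finite_cost_attains_max by blast
  obtain \<rho>' where "finite_plan x0 y0 \<rho>'" "finite_cost x0 y0 \<rho> \<le> finite_cost x0 y0 \<rho>'"
    "\<And>x y. \<rho>' x y \<noteq> 0 \<Longrightarrow> \<bar>int (d x y) - int (d x0 y0)\<bar> \<le> 1"
    "2 * qmin q \<le> mu q x0 y0 \<rho>' (-1)"
    using exists_short_plan[OF assms plan] by blast
  moreover have "finite_cost x0 y0 \<sigma> \<le> finite_cost x0 y0 \<rho>'" if "finite_plan x0 y0 \<sigma>" for \<sigma>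
    using max[OF that] \<open>finite_cost x0 y0 \<rho> \<le> finite_cost x0 y0 \<rho>'\<close> by linarith
  ultimately show ?thesis
    using that unfolding optimal_plan_iff by blast
qed

lemma finite_plan_stay: "finite_plan z z (\<lambda>x y. if x = y then q z x else 0)"
  unfolding finite_plan_def using q_nonneg q_eq_0_outside_nbhd finite_nbhd
  by auto

lemma optimal_self_plan_diagonal:
  assumes "optimal_plan q z z \<rho>" "\<rho> x y \<noteq> 0"
  shows "x = y"
proof -
  have plan: "finite_plan z z \<rho>"
    using assms(1) unfolding optimal_plan_iff by blast
  have "finite_cost z z (\<lambda>x y. if x = y then q z x else 0) = 0"
    unfolding finite_cost_def by (intro sum.neutral ballI) auto
  moreover have "finite_cost z z (\<lambda>x y. if x = y then q z x else 0) \<le> finite_cost z z \<rho>"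
    using assms(1) finite_plan_stay unfolding optimal_plan_iff by blast
  ultimately have "(\<Sum>(x, y)\<in>nbhd z \<times> nbhd z. \<rho> x y * real (d x y)) \<le> 0"
    unfolding finite_cost_def by (simp add: sum.cartesian_product sum_negf)
  moreover have "\<rho> x y * real (d x y) \<le> (\<Sum>(x, y)\<in>nbhd z \<times> nbhd z. \<rho> x y * real (d x y))"
    using member_le_sum[of "(x, y)" "nbhd z \<times> nbhd z" "\<lambda>(x, y). \<rho> x y * real (d x y)"]
      finite_plan_support[OF plan assms(2)] finite_plan_nonneg[OF plan] finite_nbhd
    by auto
  ultimately have "\<rho> x y * real (d x y) \<le> 0"
    by linarith
  moreover have "0 < \<rho> x y"
    using finite_plan_nonneg[OF plan, of x y] assms(2) by simp
  ultimately have "d x y = 0"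
    by (simp add: mult_le_0_iff)
  then show ?thesis
    using gdist_eq_0_iff[OF connected] by blast
qed

end

theorem mainTheorem1:
  fixes q :: "'a::countable \<Rightarrow> 'a \<Rightarrow> real" and x0 y0 :: 'a
  assumes "is_graph q" and "reversible q" and "connected_graph q"
  shows "(x0 \<noteq> y0 \<longrightarrow>
            (\<exists>\<rho>. optimal_plan q x0 y0 \<rho> \<and>
                 (\<forall>k::int. \<bar>k\<bar> > 1 \<longrightarrow> mu q x0 y0 \<rho> k = 0) \<and>
                 mu q x0 y0 \<rho> (-1) \<ge> 2 * qmin q)) \<and>
         (\<forall>z \<rho>. optimal_plan q z z \<rho> \<longrightarrow> (\<forall>k::int. k \<noteq> 0 \<longrightarrow> mu q z z \<rho> k = 0))"
proof -
  interpret reversible_connected_graph q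
    using assms by unfold_locales
  have "\<exists>\<rho>. optimal_plan q x0 y0 \<rho> \<and> (\<forall>k::int. \<bar>k\<bar> > 1 \<longrightarrow> mu q x0 y0 \<rho> k = 0) \<and>
      mu q x0 y0 \<rho> (-1) \<ge> 2 * qmin q" if neq: "x0 \<noteq> y0"
  proof -
    obtain \<rho> where \<rho>: "optimal_plan q x0 y0 \<rho>"
      "\<And>x y. \<rho> x y \<noteq> 0 \<Longrightarrow> \<bar>int (gdist q x y) - int (gdist q x0 y0)\<bar> \<le> 1"
      "2 * qmin q \<le> mu q x0 y0 \<rho> (-1)"
      using exists_optimal_short_plan[OF neq] by blast
    have "mu q x0 y0 \<rho> k = 0" if "\<bar>k\<bar> > 1" for k
      using \<rho>(2) that by (intro mu_eq_0) fastforce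
    with \<rho> show ?thesis by blast
  qed
  moreover have "mu q z z \<rho> k = 0" if "optimal_plan q z z \<rho>" "k \<noteq> 0" for z \<rho> k
    using optimal_self_plan_diagonal[OF that(1)] that(2) by (intro mu_eq_0) fastforce
  ultimately show ?thesis by blast
qed

end
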